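(* Let $N\ge1$, $0<\lambda\le\Lambda$, assume $\beta=\frac{\Lambda}{\lambda}(N-1)+1>2$, and let $q>1$. Let $u:\mathbb{R}^N\to[0,\infty)$ be a nonnegative viscosity solution of $\mathcal{M}^+_{\lambda,\Lambda}(D^2u)\ge u^q$ in $\mathbb{R}^N$, and set $m(R)=\min_{|x|\le R}u(x)$. Then there exists a constant $C>0$ such that $$m(R)\le C R^{-\frac{2}{q-1}}\quad\text{for all }R>0.$$
   Context: For $M\in\mathrm{Sym}_N$ with eigenvalues $e_1,\dots,e_N$, $\mathcal{M}^+_{\lambda,\Lambda}(M)=\sup_{\lambda I_N\le A\le\Lambda I_N}(-\mathrm{Tr}(AM))=-\lambda\sum_{e_k>0}e_k-\Lambda\sum_{e_k<0}e_k$. A viscosity solution of an inequality $G(x,u,Du,D^2u)\ge 0$ in an open set $\Omega$ is a lower semicontinuous $u$ such that for every $x_0\in\Omega$ and every $\varphi\in C^2$ for which $u-\varphi$ has a local minimum at $x_0$, $G(x_0,u(x_0),D\varphi(x_0),D^2\varphi(x_0))\ge0$. *)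

theory Defs
  imports "HOL-Analysis.Analysis"
begin

definition sym_mat :: "real^'n^'n \<Rightarrow> bool" where
  "sym_mat A \<longleftrightarrow> transpose A = A"

definition loewner_between :: "real \<Rightarrow> real \<Rightarrow> real^'n^'n \<Rightarrow> bool" where
  "loewner_between l L A \<longleftrightarrow> sym_mat A \<and>
     (\<forall>\<xi>::real^'n. l * (\<xi> \<bullet> \<xi>) \<le> \<xi> \<bullet> (A *v \<xi>) \<and> \<xi> \<bullet> (A *v \<xi>) \<le> L * (\<xi> \<bullet> \<xi>))"

definition pucci_max :: "real \<Rightarrow> real \<Rightarrow> real^'n^'n \<Rightarrow> real" where
  "pucci_max l L M = (SUP A\<in>{A. loewner_between l L A}. - trace (A ** M))"

definition C2_with :: "(real^'n \<Rightarrow> real) \<Rightarrow> (real^'n \<Rightarrow> real^'n) \<Rightarrow> (real^'n \<Rightarrow> real^'n^'n) \<Rightarrow> bool" where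
  "C2_with \<phi> g H \<longleftrightarrow>
     (\<forall>x. (\<phi> has_derivative (\<lambda>h. g x \<bullet> h)) (at x)) \<and>
     (\<forall>x. (g has_derivative (\<lambda>h. H x *v h)) (at x)) \<and>
     continuous_on UNIV H"

definition lsc :: "(real^'n \<Rightarrow> real) \<Rightarrow> bool" where
  "lsc u \<longleftrightarrow> (\<forall>x. \<forall>t < u x. \<forall>\<^sub>F y in at x. t < u y)"

text \<open>Viscosity solution (supersolution sense) of M^+(D^2 u) >= u^q in R^N.\<close>
definition visc_pucci_ineq :: "real \<Rightarrow> real \<Rightarrow> real \<Rightarrow> (real^'n \<Rightarrow> real) \<Rightarrow> bool" where
  "visc_pucci_ineq l L q u \<longleftrightarrow> lsc u \<and>
     (\<forall>x0 \<phi> g H. C2_with \<phi> g H \<and>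
        (\<exists>e>0. \<forall>y\<in>ball x0 e. u y - \<phi> y \<ge> u x0 - \<phi> x0) \<longrightarrow>
        pucci_max l L (H x0) - u x0 powr q \<ge> 0)"

end

theory Submission
  imports Defs
begin

text \<open>Write \<open>m(R)\<close> for the infimum of \<open>u\<close> on the closed ball of radius \<open>R\<close> and \<open>k = N\<Lambda>/\<lambda>\<close>.
  Comparison with the paraboloid \<open>m(R)\<^sup>q (R\<^sup>2 - |x|\<^sup>2) / (4N\<Lambda>)\<close>, whose Pucci operator is
  below \<open>m(R)\<^sup>q\<close>, gives \<open>m(R/2) \<ge> c R\<^sup>2 m(R)\<^sup>q\<close>. Comparison on an annulus with the barrier
  \<open>(\<rho>\<^sup>2 + |x|\<^sup>2)\<^sup>-\<^sup>k\<close>, whose Pucci operator is negative for \<open>|x| > \<rho>\<close>, gives the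
  weak Harnack-type bound \<open>m(2\<rho>) \<ge> (2/5)\<^sup>k m(\<rho>)\<close>. Together \<open>m(R) \<ge> c' R\<^sup>2 m(R)\<^sup>q\<close>,
  i.e. \<open>m(R)\<^sup>q\<^sup>-\<^sup>1 \<le> R\<^sup>-\<^sup>2/c'\<close>. This barrier works in every dimension.\<close>

text \<open>The Hessian of \<open>f(|x|\<^sup>2)\<close> is \<open>2f'(|x|\<^sup>2) I + 4f''(|x|\<^sup>2) x x\<^sup>T\<close>.\<close>

definition radial_matrix :: "real \<Rightarrow> real \<Rightarrow> real^'n \<Rightarrow> real^'n^'n" where
  "radial_matrix a b x = a *\<^sub>R mat 1 + b *\<^sub>R (\<chi> i j. x$i * x$j)"

lemma outer_mult_vec: "(\<chi> i j. x$i * x$j) *v h = (x \<bullet> h) *\<^sub>R (x :: real^'n)"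
  by (simp add: vec_eq_iff matrix_vector_mult_def inner_vec_def sum_distrib_left algebra_simps)

lemma radial_matrix_mult_vec:
  "radial_matrix a b x *v h = a *\<^sub>R h + (b * (x \<bullet> h)) *\<^sub>R x"
  by (simp add: radial_matrix_def matrix_vector_mult_add_rdistrib scaleR_matrix_vector_assoc[symmetric] outer_mult_vec)

lemma trace_scaleR: "trace (c *\<^sub>R A) = c * trace (A :: real^'n^'n)"
  by (simp add: trace_def sum_distrib_left)

lemma trace_mult_outer: "trace (A ** (\<chi> i j. x$i * x$j)) = x \<bullet> (A *v x)"
  by (simp add: trace_def matrix_matrix_mult_def inner_vec_def matrix_vector_mult_def sum_distrib_left mult_ac)

lemma trace_mult_radial_matrix:
  "trace (A ** radial_matrix a b x) = a * trace A + b * (x \<bullet> (A *v x))"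
  by (simp add: radial_matrix_def matrix_add_ldistrib matrix_scalar_ac scaleR_matrix_vector_assoc[symmetric] trace_add trace_scaleR trace_mult_outer)

lemma loewner_between_mat:
  assumes "l \<le> L"
  shows "loewner_between l L (mat l :: real^'n^'n)"
proof -
  have "mat l = l *\<^sub>R (mat 1 :: real^'n^'n)"
    by (simp add: vec_eq_iff mat_def)
  then have "mat l *v \<xi> = l *\<^sub>R \<xi>" for \<xi> :: "real^'n"
    by (metis matrix_vector_mul_lid scaleR_matrix_vector_assoc)
  then show ?thesis
    using assms by (auto simp: loewner_between_def sym_mat_def mult_right_mono)
qed

lemma loewner_between_diag_le:
  assumes "loewner_between l L A"
  shows "A$i$i \<le> L"
  using assms[unfolded loewner_between_def, THEN conjunct2, rule_format, of "axis i 1"]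
  by (simp add: inner_axis' matrix_vector_mult_basis column_def inner_axis_axis)

lemma loewner_between_trace_le:
  assumes "loewner_between l L (A :: real^'n^'n)"
  shows "trace A \<le> real CARD('n) * L"
  using sum_bounded_above[of UNIV "\<lambda>i. A$i$i" L] loewner_between_diag_le[OF assms]
  by (simp add: trace_def)

lemma pucci_max_radial_matrix_le:
  fixes x :: "real^'n"
  assumes "l \<le> L" "a \<le> 0" "b \<ge> 0"
  shows "pucci_max l L (radial_matrix a b x) \<le> - a * real CARD('n) * L - b * l * (x \<bullet> x)"
  unfolding pucci_max_def
proof (rule cSUP_least)
  show "{A :: real^'n^'n. loewner_between l L A} \<noteq> {}"
    using loewner_between_mat[OF assms(1)] by blast
next
  fix A :: "real^'n^'n" assume "A \<in> {A. loewner_between l L A}"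
  then have A: "loewner_between l L A" by simp
  have "- a * trace A \<le> - a * (real CARD('n) * L)"
    using loewner_between_trace_le[OF A] assms(2) by (intro mult_left_mono) auto
  moreover have "b * (l * (x \<bullet> x)) \<le> b * (x \<bullet> (A *v x))"
    using A assms(3) by (intro mult_left_mono) (auto simp: loewner_between_def)
  ultimately show "- trace (A ** radial_matrix a b x) \<le> - a * real CARD('n) * L - b * l * (x \<bullet> x)"
    by (simp add: trace_mult_radial_matrix algebra_simps)
qed

lemma continuous_on_radial_matrix:
  assumes "continuous_on S a" "continuous_on S b" "continuous_on S x"
  shows "continuous_on S (\<lambda>y. radial_matrix (a y) (b y) (x y) :: real^'n^'n)"
  unfolding radial_matrix_def
  by (intro continuous_intros continuous_on_vec_lambda continuous_on_component assms)

lemma C2_with_comp_inner_self: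
  fixes f f' f'' :: "real \<Rightarrow> real"
  assumes f: "\<And>s. s \<ge> 0 \<Longrightarrow> (f has_real_derivative f' s) (at s)"
    and f': "\<And>s. s \<ge> 0 \<Longrightarrow> (f' has_real_derivative f'' s) (at s)"
    and f'': "continuous_on {0..} f''"
  shows "C2_with (\<lambda>x::real^'n. f (x \<bullet> x)) (\<lambda>x. (2 * f' (x \<bullet> x)) *\<^sub>R x)
           (\<lambda>x. radial_matrix (2 * f' (x \<bullet> x)) (4 * f'' (x \<bullet> x)) x)"
  unfolding C2_with_def
proof (intro conjI allI)
  fix x :: "real^'n"
  show "((\<lambda>x. f (x \<bullet> x)) has_derivative (\<lambda>h. ((2 * f' (x \<bullet> x)) *\<^sub>R x) \<bullet> h)) (at x)"
    by (rule DERIV_compose_FDERIV[OF f, THEN has_derivative_eq_rhs])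
       (auto intro!: derivative_eq_intros simp: inner_commute)
  show "((\<lambda>x. (2 * f' (x \<bullet> x)) *\<^sub>R x) has_derivative (\<lambda>h. radial_matrix (2 * f' (x \<bullet> x)) (4 * f'' (x \<bullet> x)) x *v h)) (at x)"
  proof -
    have "((\<lambda>x. f' (x \<bullet> x)) has_derivative (\<lambda>h. (h \<bullet> x + x \<bullet> h) * f'' (x \<bullet> x))) (at x)"
      by (rule DERIV_compose_FDERIV[OF f']) (auto intro!: derivative_eq_intros)
    then have "((\<lambda>x. (2 * f' (x \<bullet> x)) *\<^sub>R x) has_derivative
        (\<lambda>h. (2 * f' (x \<bullet> x)) *\<^sub>R h + (2 * ((h \<bullet> x + x \<bullet> h) * f'' (x \<bullet> x))) *\<^sub>R x)) (at x)"
      by (auto intro!: derivative_eq_intros)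
    then show ?thesis
      by (rule has_derivative_eq_rhs) (simp add: fun_eq_iff radial_matrix_mult_vec inner_commute algebra_simps)
  qed
next
  have "continuous_on {0..} f'"
    using f' by (intro continuous_at_imp_continuous_on) (auto intro: DERIV_isCont)
  moreover have "continuous_on UNIV (\<lambda>x::real^'n. x \<bullet> x)" "range (\<lambda>x::real^'n. x \<bullet> x) \<subseteq> {0..}"
    by (auto intro: continuous_intros)
  ultimately have "continuous_on UNIV (\<lambda>x::real^'n. f' (x \<bullet> x))"
    and "continuous_on UNIV (\<lambda>x::real^'n. f'' (x \<bullet> x))"
    using f'' continuous_on_compose2 by blast+
  then show "continuous_on UNIV (\<lambda>x::real^'n. radial_matrix (2 * f' (x \<bullet> x)) (4 * f'' (x \<bullet> x)) x)"
    by (intro continuous_on_radial_matrix continuous_on_mult continuous_on_const continuous_on_id)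
qed

lemma lsc_diff_continuous:
  assumes "lsc u" "continuous_on UNIV w"
  shows "lsc (\<lambda>x. u x - w x)"
  unfolding lsc_def
proof (intro allI impI)
  fix x t assume t: "t < u x - w x"
  define e where "e = (u x - w x - t) / 2"
  have e: "e > 0" using t by (simp add: e_def)
  have "\<forall>\<^sub>F y in at x. u x - e < u y"
    using assms(1) e unfolding lsc_def by auto
  moreover have "\<forall>\<^sub>F y in at x. dist (w y) (w x) < e"
    using assms(2) e by (intro tendstoD) (auto simp: continuous_on_eq_continuous_at isCont_def)
  ultimately show "\<forall>\<^sub>F y in at x. t < u y - w y"
  proof eventually_elim
    case (elim y)
    then have "w y < w x + e" by (simp add: dist_real_def abs_less_iff)
    with elim(1) show ?case by (simp add: e_def field_simps)
  qed
qed

lemma lsc_attains_min: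
  fixes f :: "'a::metric_space \<Rightarrow> real"
  assumes lsc: "\<forall>x. \<forall>t<f x. \<forall>\<^sub>F y in at x. t < f y" and "compact S" "S \<noteq> {}"
  shows "\<exists>x\<in>S. \<forall>y\<in>S. f x \<le> f y"
proof (rule ccontr)
  assume "\<not> ?thesis"
  then obtain g where g: "\<forall>x\<in>S. g x \<in> S \<and> f (g x) < f x"
    by (metis not_le)
  have "\<exists>d>0. \<forall>z. dist z x < d \<longrightarrow> f (g x) < f z" if "x \<in> S" for x
  proof -
    have "\<forall>\<^sub>F y in at x. f (g x) < f y" using lsc g that by blast
    then obtain d where "d > 0" "\<forall>z. z \<noteq> x \<and> dist z x < d \<longrightarrow> f (g x) < f z"
      unfolding eventually_at by auto
    then show ?thesis using g that by metis
  qed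
  then obtain d where d: "\<forall>x\<in>S. d x > 0 \<and> (\<forall>z. dist z x < d x \<longrightarrow> f (g x) < f z)"
    by metis
  then obtain C where C: "C \<subseteq> S" "finite C" "S \<subseteq> (\<Union>x\<in>C. ball x (d x))"
    using compactE_image[OF assms(2), of S "\<lambda>x. ball x (d x)"] by force
  then have "C \<noteq> {}" using assms(3) by auto
  then have "Min (f ` g ` C) \<in> f ` g ` C"
    using C(2) by (intro Min_in) auto
  then obtain x0 where x0: "x0 \<in> C" "f (g x0) = Min (f ` g ` C)"
    by auto
  then obtain x where x: "x \<in> C" "dist (g x0) x < d x"
    using C g by (force simp: dist_commute)
  then have "f (g x) < f (g x0)"
    using C d by auto
  moreover have "f (g x0) \<le> f (g x)"
    unfolding x0(2) using C(2) x(1) by (intro Min_le) auto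
  ultimately show False by simp
qed

text \<open>The viscosity inequality at an interior minimum of \<open>u - \<phi>\<close> contradicts a strict bound on the
  Pucci operator of \<open>\<phi>\<close>, so the minimum lies on the boundary.\<close>
lemma visc_comparison:
  fixes u \<phi> :: "real^'n \<Rightarrow> real"
  assumes V: "visc_pucci_ineq l L q u" and \<phi>: "C2_with \<phi> g H"
    and K: "compact K" and U: "open U" "U \<subseteq> K"
    and boundary: "\<forall>x\<in>K - U. \<phi> x \<le> u x"
    and strict: "\<forall>x\<in>U. pucci_max l L (H x) < u x powr q"
    and x: "x \<in> K"
  shows "\<phi> x \<le> u x"
proof (rule ccontr)
  assume "\<not> ?thesis"
  have "continuous_on UNIV \<phi>"
    using \<phi> unfolding C2_with_def
    by (intro continuous_at_imp_continuous_on) (auto intro: has_derivative_continuous)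
  then have "lsc (\<lambda>x. u x - \<phi> x)"
    using V by (intro lsc_diff_continuous) (auto simp: visc_pucci_ineq_def)
  then obtain y where y: "y \<in> K" "\<forall>z\<in>K. u y - \<phi> y \<le> u z - \<phi> z"
    using lsc_attains_min[of "\<lambda>x. u x - \<phi> x" K] K x unfolding lsc_def by blast
  have "u y - \<phi> y < 0"
    using y x \<open>\<not> \<phi> x \<le> u x\<close> by force
  with boundary y(1) have "y \<in> U"
    by force
  then obtain e where "e > 0" "ball y e \<subseteq> U"
    using U(1) openE by blast
  moreover have "\<forall>z\<in>ball y e. u y - \<phi> y \<le> u z - \<phi> z"
    using y \<open>ball y e \<subseteq> U\<close> U(2) by blast
  ultimately have "u y powr q \<le> pucci_max l L (H y)"
    using V \<phi> unfolding visc_pucci_ineq_def by force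
  with strict \<open>y \<in> U\<close> show False by fastforce
qed

lemma visc_ge_paraboloid:
  fixes u :: "real^'n \<Rightarrow> real"
  assumes l: "0 < l" "l \<le> L" and nn: "\<forall>x. 0 \<le> u x" and V: "visc_pucci_ineq l L q u"
    and q: "0 \<le> q" and m: "0 \<le> m" "\<forall>y\<in>cball 0 R. m \<le> u y" and x: "x \<in> cball 0 R"
  shows "m powr q / (4 * real CARD('n) * L) * (R\<^sup>2 - x \<bullet> x) \<le> u x"
proof (cases "m = 0")
  case True
  then show ?thesis using nn by simp
next
  case False
  define N where "N = real CARD('n)"
  define d where "d = m powr q / (4 * N * L)"
  have N: "N > 0" and L: "L > 0" using l by (auto simp: N_def)
  then have NL: "N * L > 0" by simp
  have d: "d > 0"
    unfolding d_def using False m NL by (intro divide_pos_pos) (auto simp: mult.assoc)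
  have C2: "C2_with (\<lambda>x::real^'n. d * (R\<^sup>2 - x \<bullet> x)) (\<lambda>x. (2 * - d) *\<^sub>R x)
      (\<lambda>x. radial_matrix (2 * - d) (4 * 0) x)"
    by (rule C2_with_comp_inner_self) (auto intro!: derivative_eq_intros)
  have "d * (R\<^sup>2 - x \<bullet> x) \<le> u x"
  proof (rule visc_comparison[OF V C2 compact_cball open_ball ball_subset_cball _ _ x])
    show "\<forall>y\<in>cball 0 R - ball 0 R. d * (R\<^sup>2 - y \<bullet> y) \<le> u y"
      using nn by (auto simp: power2_norm_eq_inner[symmetric])
    show "\<forall>y\<in>ball 0 R. pucci_max l L (radial_matrix (2 * - d) (4 * 0) y) < u y powr q"
    proof
      fix y :: "real^'n" assume y: "y \<in> ball 0 R"
      have "pucci_max l L (radial_matrix (2 * - d) (4 * 0) y) \<le> 2 * d * N * L"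
        using pucci_max_radial_matrix_le[of l L "2 * - d" "4 * 0" y] l d by (simp add: N_def)
      also have "\<dots> = m powr q / 2"
        using N L by (simp add: d_def field_simps)
      also have "\<dots> < m powr q"
        using False m by simp
      also have "\<dots> \<le> u y powr q"
        using m y q by (intro powr_mono2) auto
      finally show "pucci_max l L (radial_matrix (2 * - d) (4 * 0) y) < u y powr q" .
    qed
  qed
  then show ?thesis by (simp add: d_def N_def)
qed

lemma pucci_max_barrier_neg:
  fixes x :: "real^'n"
  assumes l: "0 < l" "l \<le> L" and A: "0 < A" and c: "0 < c" "c \<le> x \<bullet> x"
    and k: "real CARD('n) * L \<le> k * l"
  shows "pucci_max l L (radial_matrix (2 * (- k * A * (c + x \<bullet> x) powr (- k - 1)))
           (4 * (k * (k + 1) * A * (c + x \<bullet> x) powr (- k - 2))) x) < 0"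
proof -
  define N where "N = real CARD('n)"
  define s where "s = x \<bullet> x"
  define P where "P = (c + s) powr (- k - 2)"
  have NL: "N * L > 0" using l by (simp add: N_def)
  have "0 < k * l" using k NL by (simp add: N_def)
  then have kpos: "k > 0" using l by (simp add: zero_less_mult_iff)
  have P: "P > 0" using c by (simp add: P_def s_def)
  have s: "c \<le> s" "0 < s" using c unfolding s_def by linarith+
  have cs: "c + s > 0" using c s by simp
  have "(c + s) powr (- k - 1) = (c + s) powr ((- k - 2) + 1)"
    by (rule arg_cong[where f = "\<lambda>t. (c + s) powr t"]) simp
  also have "\<dots> = P * (c + s)"
    using cs by (simp only: powr_add P_def powr_one_gt_zero_iff) simp
  finally have P1: "(c + s) powr (- k - 1) = P * (c + s)" .
  have "N * L + l \<le> (k + 1) * l"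
    using k by (simp add: N_def algebra_simps)
  then have "(N * L + l) * s \<le> (k + 1) * l * s"
    using s by (intro mult_right_mono) simp_all
  moreover have "(c + s) * (N * L) \<le> (s + s) * (N * L)"
    using s NL by (intro mult_right_mono) simp_all
  moreover have "0 < l * s"
    using l s by simp
  ultimately have neg: "(c + s) * (N * L) - 2 * (k + 1) * l * s < 0"
    by (simp add: algebra_simps)
  define a where "a = 2 * (- k * A * (c + s) powr (- k - 1))"
  define b where "b = 4 * (k * (k + 1) * A * P)"
  have "pucci_max l L (radial_matrix a b x) \<le> - a * N * L - b * l * s"
    using pucci_max_radial_matrix_le[OF l(2), of a b x] kpos A P cs
    by (simp add: a_def b_def N_def s_def)
  also have "\<dots> = 2 * k * A * P * ((c + s) * (N * L) - 2 * (k + 1) * l * s)"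
    by (simp add: a_def b_def P1 algebra_simps)
  also have "\<dots> < 0"
    using kpos A P neg by (simp add: mult_pos_neg)
  finally show ?thesis by (simp add: a_def b_def P_def s_def)
qed

lemma mult_powr_neg_le:
  fixes A e k t :: real
  assumes "0 < A" "0 < e" "0 < k" "(A / e) powr (1 / k) \<le> t"
  shows "A * t powr (- k) \<le> e"
proof -
  have "0 < (A / e) powr (1 / k)" using assms by simp
  then have t: "0 < t" using assms(4) by linarith
  have "A / e = ((A / e) powr (1 / k)) powr k"
    using assms by (simp add: powr_powr)
  also have "\<dots> \<le> t powr k"
    using assms by (intro powr_mono2) auto
  finally show ?thesis
    using assms t by (simp add: powr_minus divide_simps mult.commute)
qed

text \<open>Subtracting \<open>e\<close> makes the barrier negative, hence below \<open>u\<close>, outside a large ball, so the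
  comparison takes place on a bounded annulus; on its inner sphere the barrier equals \<open>m - e\<close>.\<close>
lemma visc_ge_barrier_on_annulus:
  fixes u :: "real^'n \<Rightarrow> real"
  assumes l: "0 < l" "l \<le> L" and nn: "\<forall>x. 0 \<le> u x" and V: "visc_pucci_ineq l L q u"
    and \<rho>: "0 < \<rho>" and m: "0 < m" "\<forall>y\<in>cball 0 \<rho>. m \<le> u y"
    and k: "real CARD('n) * L \<le> k * l" and e: "0 < e" and x: "\<rho> \<le> norm x"
  shows "m * (2 * \<rho>\<^sup>2) powr k * (\<rho>\<^sup>2 + x \<bullet> x) powr (- k) - e \<le> u x"
proof -
  define c where "c = \<rho>\<^sup>2"
  define A where "A = m * (2 * c) powr k"
  define R where "R = max (norm x) (sqrt ((A / e) powr (1 / k)))"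
  define \<phi> where "\<phi> = (\<lambda>z::real^'n. A * (c + z \<bullet> z) powr (- k) - e)"
  define f' where "f' = (\<lambda>s. - k * A * (c + s) powr (- k - 1))"
  define f'' where "f'' = (\<lambda>s. k * (k + 1) * A * (c + s) powr (- k - 2))"
  have c: "0 < c" using \<rho> by (simp add: c_def)
  have A: "0 < A" using m c by (simp add: A_def)
  have "0 < real CARD('n) * L" using l by simp
  then have "0 < k * l" using k by linarith
  then have kpos: "0 < k" using l by (simp add: zero_less_mult_iff)
  have C2: "C2_with \<phi> (\<lambda>z. (2 * f' (z \<bullet> z)) *\<^sub>R z)
      (\<lambda>z. radial_matrix (2 * f' (z \<bullet> z)) (4 * f'' (z \<bullet> z)) z)"
    unfolding \<phi>_def f'_def f''_def using c
    by (intro C2_with_comp_inner_self)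
       (auto intro!: derivative_eq_intros continuous_intros simp: field_simps)
  have "\<phi> x \<le> u x"
  proof (rule visc_comparison[OF V C2])
    show "compact (cball (0::real^'n) R - ball 0 \<rho>)"
      by (intro compact_diff compact_cball open_ball)
    show "open {z::real^'n. \<rho> < norm z \<and> norm z < R}"
      by (intro open_Collect_conj open_Collect_less continuous_intros)
    show "{z::real^'n. \<rho> < norm z \<and> norm z < R} \<subseteq> cball 0 R - ball 0 \<rho>"
      by auto
    show "x \<in> cball 0 R - ball 0 \<rho>"
      using x by (auto simp: R_def)
    show "\<forall>z\<in>cball 0 R - ball 0 \<rho> - {z. \<rho> < norm z \<and> norm z < R}. \<phi> z \<le> u z"
    proof
      fix z :: "real^'n" assume "z \<in> cball 0 R - ball 0 \<rho> - {z. \<rho> < norm z \<and> norm z < R}"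
      then consider "norm z = \<rho>" | "norm z = R" by fastforce
      then show "\<phi> z \<le> u z"
      proof cases
        case 1
        then have "\<phi> z = m - e"
          using c by (simp add: \<phi>_def A_def c_def power2_norm_eq_inner[symmetric] powr_add[symmetric])
        moreover have "m \<le> u z" using m(2) 1 by simp
        ultimately show ?thesis using e by simp
      next
        case 2
        have "(A / e) powr (1 / k) \<le> R\<^sup>2"
          by (rule sqrt_le_D) (simp add: R_def)
        also have "\<dots> \<le> c + z \<bullet> z"
          using c 2 by (simp add: power2_norm_eq_inner[symmetric])
        finally have "A * (c + z \<bullet> z) powr (- k) \<le> e"
          by (rule mult_powr_neg_le[OF A e kpos])
        then show ?thesis using nn[rule_format, of z] by (simp add: \<phi>_def)
      qed
    qed
    show "\<forall>z\<in>{z. \<rho> < norm z \<and> norm z < R}.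
        pucci_max l L (radial_matrix (2 * f' (z \<bullet> z)) (4 * f'' (z \<bullet> z)) z) < u z powr q"
    proof
      fix z :: "real^'n" assume "z \<in> {z. \<rho> < norm z \<and> norm z < R}"
      then have "c \<le> z \<bullet> z"
        using \<rho> by (simp add: c_def power2_norm_eq_inner[symmetric] power_mono)
      then have "pucci_max l L (radial_matrix (2 * f' (z \<bullet> z)) (4 * f'' (z \<bullet> z)) z) < 0"
        unfolding f'_def f''_def using pucci_max_barrier_neg[OF l A c] k by blast
      also have "0 \<le> u z powr q"
        by simp
      finally show "pucci_max l L (radial_matrix (2 * f' (z \<bullet> z)) (4 * f'' (z \<bullet> z)) z) < u z powr q" .
    qed
  qed
  then show ?thesis by (simp add: \<phi>_def A_def c_def)
qed

lemma visc_ge_barrier: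
  fixes u :: "real^'n \<Rightarrow> real"
  assumes l: "0 < l" "l \<le> L" and nn: "\<forall>x. 0 \<le> u x" and V: "visc_pucci_ineq l L q u"
    and \<rho>: "0 < \<rho>" and m: "0 \<le> m" "\<forall>y\<in>cball 0 \<rho>. m \<le> u y" and x: "norm x \<le> 2 * \<rho>"
  shows "m * (2 / 5) powr (real CARD('n) * L / l) \<le> u x"
proof -
  define k where "k = real CARD('n) * L / l"
  have k: "real CARD('n) * L \<le> k * l" using l by (simp add: k_def)
  have "0 < k" using l by (simp add: k_def)
  then have le_m: "m * (2 / 5) powr k \<le> m"
    using m by (simp add: mult_left_le powr_le1)
  consider "m = 0" | "norm x \<le> \<rho>" | "0 < m" "\<rho> < norm x"
    using m by linarith
  then have "m * (2 / 5) powr k \<le> u x"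
  proof cases
    case 1
    then show ?thesis using nn by simp
  next
    case 2
    then have "m \<le> u x" using m(2) by simp
    then show ?thesis using le_m by linarith
  next
    case 3
    define c where "c = \<rho>\<^sup>2"
    have c: "0 < c" using \<rho> by (simp add: c_def)
    have barrier: "m * (2 * c) powr k * (c + x \<bullet> x) powr (- k) \<le> u x"
    proof (rule field_le_epsilon)
      fix e :: real assume "0 < e"
      then show "m * (2 * c) powr k * (c + x \<bullet> x) powr (- k) \<le> u x + e"
        using visc_ge_barrier_on_annulus[OF l nn V \<rho> 3(1) m(2) k, of e x] 3 by (simp add: c_def)
    qed
    have "(norm x)\<^sup>2 \<le> (2 * \<rho>)\<^sup>2"
      using x by (intro power_mono) auto
    then have "x \<bullet> x \<le> 4 * c"
      unfolding c_def power2_norm_eq_inner[symmetric] by (simp add: power_mult_distrib)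
    then have decay: "(5 * c) powr (- k) \<le> (c + x \<bullet> x) powr (- k)"
      using c \<open>0 < k\<close> by (intro powr_mono2') (auto simp: add_pos_nonneg)
    have "(2 / 5) powr k = (2 * c) powr k * (5 * c) powr (- k)"
      using c by (simp add: powr_minus powr_divide[symmetric] divide_inverse[symmetric])
    then have "m * (2 / 5) powr k = m * (2 * c) powr k * (5 * c) powr (- k)"
      by simp
    also have "\<dots> \<le> m * (2 * c) powr k * (c + x \<bullet> x) powr (- k)"
      using 3(1) decay by (intro mult_left_mono) auto
    finally show ?thesis
      using barrier by linarith
  qed
  then show ?thesis by (simp add: k_def)
qed

lemma Inf_cball_decay:
  fixes u :: "real^'n \<Rightarrow> real"
  assumes l: "0 < l" "l \<le> L" and nn: "\<forall>x. 0 \<le> u x" and V: "visc_pucci_ineq l L q u"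
    and q: "0 \<le> q" and R: "0 < R"
  shows "3 * (2 / 5) powr (real CARD('n) * L / l) / (16 * real CARD('n) * L) * R\<^sup>2
           * Inf (u ` cball 0 R) powr q \<le> Inf (u ` cball 0 R)"
proof -
  define N where "N = real CARD('n)"
  define k where "k = N * L / l"
  define m where "m = Inf (u ` cball 0 R)"
  define m' where "m' = Inf (u ` cball 0 (R / 2))"
  have N: "0 < N" and L: "0 < L" using l by (auto simp: N_def)
  have bdd: "bdd_below (u ` S)" for S
    using nn by (auto intro: bdd_belowI[of _ 0])
  have m: "0 \<le> m" "\<forall>y\<in>cball 0 R. m \<le> u y"
    unfolding m_def using R nn bdd by (auto intro: cInf_greatest cInf_lower)
  have m': "0 \<le> m'" "\<forall>y\<in>cball 0 (R / 2). m' \<le> u y"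
    unfolding m'_def using R nn bdd by (auto intro: cInf_greatest cInf_lower)
  have "m powr q * (3 * R\<^sup>2) / (16 * N * L) \<le> m'"
    unfolding m'_def
  proof (rule cInf_greatest)
    show "u ` cball 0 (R / 2) \<noteq> {}" using R by auto
  next
    fix t assume "t \<in> u ` cball 0 (R / 2)"
    then obtain y where y: "y \<in> cball 0 (R / 2)" "t = u y" by auto
    have "(norm y)\<^sup>2 \<le> (R / 2)\<^sup>2"
      using y by (intro power_mono) auto
    then have "3 * R\<^sup>2 / 4 \<le> R\<^sup>2 - y \<bullet> y"
      by (simp add: power2_norm_eq_inner[symmetric] power_divide)
    then have "m powr q / (4 * N * L) * (3 * R\<^sup>2 / 4) \<le> m powr q / (4 * N * L) * (R\<^sup>2 - y \<bullet> y)"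
      using N L by (intro mult_left_mono) auto
    also have "\<dots> \<le> u y"
      using visc_ge_paraboloid[OF l nn V q m] y R by (simp add: N_def)
    finally show "m powr q * (3 * R\<^sup>2) / (16 * N * L) \<le> t"
      using y by (simp add: field_simps)
  qed
  then have "m powr q * (3 * R\<^sup>2) / (16 * N * L) * (2 / 5) powr k \<le> m' * (2 / 5) powr k"
    by (intro mult_right_mono) auto
  also have "\<dots> \<le> m"
    unfolding m_def
  proof (rule cInf_greatest)
    show "u ` cball 0 R \<noteq> {}" using R by auto
  next
    fix t assume "t \<in> u ` cball 0 R"
    then obtain y where y: "y \<in> cball 0 R" "t = u y" by auto
    have "0 < R / 2" using R by simp
    from visc_ge_barrier[OF l nn V this m'] y show "m' * (2 / 5) powr k \<le> t"
      by (simp add: k_def N_def)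
  qed
  finally show ?thesis
    by (simp add: m_def k_def N_def field_simps)
qed

lemma le_powr_of_mult_powr_le:
  fixes a m q :: real
  assumes "0 \<le> m" "0 < a" "1 < q" "a * m powr q \<le> m"
  shows "m \<le> (1 / a) powr (1 / (q - 1))"
proof (cases "m = 0")
  case False
  then have m: "0 < m" using assms(1) by simp
  have "m * (a * m powr (q - 1)) = a * m powr q"
    using m by (simp add: powr_diff field_simps)
  then have "m * (a * m powr (q - 1)) \<le> m * 1"
    using assms(4) by linarith
  then have "m powr (q - 1) \<le> 1 / a"
    using m assms(2) by (simp add: field_simps)
  then have "(m powr (q - 1)) powr (1 / (q - 1)) \<le> (1 / a) powr (1 / (q - 1))"
    using assms(3) by (intro powr_mono2) auto
  then show ?thesis
    using m assms(3) by (simp add: powr_powr)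
qed simp

theorem lemma2p4:
  fixes u :: "real^'n \<Rightarrow> real" and l L q :: real
  assumes "0 < l" "l \<le> L"
    and "L / l * (real CARD('n) - 1) + 1 > 2"
    and "q > 1"
    and "\<forall>x. u x \<ge> 0"
    and "visc_pucci_ineq l L q u"
  shows "\<exists>C>0. \<forall>R>0. Inf (u ` cball 0 R) \<le> C * R powr (- 2 / (q - 1))"
proof -
  define a where "a = 3 * (2 / 5) powr (real CARD('n) * L / l) / (16 * real CARD('n) * L)"
  have a: "0 < a" using assms(1,2) by (simp add: a_def)
  show ?thesis
  proof (intro exI conjI allI impI)
    fix R :: real assume R: "0 < R"
    define m where "m = Inf (u ` cball 0 R)"
    have "0 \<le> m"
      unfolding m_def using R assms(5) by (intro cInf_greatest) auto
    moreover have "a * R\<^sup>2 * m powr q \<le> m"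
      using Inf_cball_decay[OF assms(1,2,5,6) _ R] assms(4) by (simp add: a_def m_def)
    ultimately have "m \<le> (1 / (a * R\<^sup>2)) powr (1 / (q - 1))"
      using a R assms(4) by (intro le_powr_of_mult_powr_le) auto
    also have "\<dots> = (1 / a) powr (1 / (q - 1)) * (1 / R\<^sup>2) powr (1 / (q - 1))"
      using a R by (simp add: powr_mult[symmetric])
    also have "1 / R\<^sup>2 = R powr (- 2)"
      using R by (simp add: powr_minus powr_realpow divide_inverse)
    also have "(R powr (- 2)) powr (1 / (q - 1)) = R powr (- 2 / (q - 1))"
      by (simp add: powr_powr)
    finally show "m \<le> (1 / a) powr (1 / (q - 1)) * R powr (- 2 / (q - 1))" .
  qed (use a in simp)
qed

end
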